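(* Let $m \geq 2$, let $D \subset \mathbb{R}^m$ be a domain, and let $u \in C^2(D)$ be harmonic in $D$ (i.e. $\nabla^2 u = 0$ in $D$). Then for every $x \in D$ and every $r > 0$ such that the closed ball $\overline{B_r(x)} = \{y : |y-x| \le r\}$ is contained in $D$, \[ u(x) = \frac{m}{|B_r|} \int_{B_r(x)} u(y) \log \frac{r}{|x-y|} \, \mathrm{d}y , \] where $B_r(x) = \{y : |y-x| < r\}$ and $|B_r|$ denotes its Lebesgue measure.
   Context: $|B_r| = \omega_m r^m / m$ with $\omega_m = 2\pi^{m/2}/\Gamma(m/2)$ the surface area of the unit sphere in $\mathbb{R}^m$. *)

theory Defs
  imports "HOL-Analysis.Analysis"
begin

definition C2_on :: "'a::euclidean_space set \<Rightarrow> ('a \<Rightarrow> real) \<Rightarrow> bool" where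
  "C2_on D u \<longleftrightarrow>
     (\<exists>Du :: 'a \<Rightarrow> ('a \<Rightarrow>\<^sub>L real). \<exists>D2u :: 'a \<Rightarrow> ('a \<Rightarrow>\<^sub>L ('a \<Rightarrow>\<^sub>L real)).
        (\<forall>y\<in>D. (u has_derivative blinfun_apply (Du y)) (at y)) \<and>
        (\<forall>y\<in>D. (Du has_derivative blinfun_apply (D2u y)) (at y)) \<and>
        continuous_on D D2u)"

definition laplacian :: "('a::euclidean_space \<Rightarrow> real) \<Rightarrow> 'a \<Rightarrow> real" where
  "laplacian u y =
     (\<Sum>i\<in>Basis. frechet_derivative (\<lambda>z. frechet_derivative u (at z) i) (at y) i)"

definition harmonic_on :: "'a::euclidean_space set \<Rightarrow> ('a \<Rightarrow> real) \<Rightarrow> bool" where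
  "harmonic_on D u \<longleftrightarrow> C2_on D u \<and> (\<forall>y\<in>D. laplacian u y = 0)"

end

(*
  Write \<Lambda>(z) = -ln |z| on the unit ball and \<Lambda>(z) = 0 outside it. The substitution
  y = x + r z turns the claim into \<integral> u(x + r z) \<Lambda>(z) dz = u(x) \<integral> \<Lambda>, and
  \<integral> \<Lambda> = |B_1| / m follows from \<Lambda>(z) = \<integral>_|z|^1 ds / s and Fubini.
  As a function of r the left-hand side has derivative \<integral> \<Lambda>(z) \<nabla>u(x + r z) \<cdot> z dz.
  Now \<Lambda>(z) z = -\<nabla>V(z) for V(z) = (1 - |z|^2 + |z|^2 ln |z|^2) / 4, and V vanishes to
  first order on the unit sphere, so integrating by parts turns the derivative into
  r \<integral> V(z) \<Delta>u(x + r z) dz = 0. Hence the left-hand side is constant in r and equals its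
  value u(x) \<integral> \<Lambda> at r = 0.
*)
theory Submission
  imports Defs
begin

lemma minus_mult_ln_le_two_sqrt:
  fixes s :: real
  assumes "0 < s"
  shows "- (s * ln s) \<le> 2 * sqrt s"
proof -
  have "- ln s = 2 * ln (1 / sqrt s)"
    using assms by (simp add: ln_div ln_sqrt)
  also have "\<dots> \<le> 2 * (1 / sqrt s - 1)"
    using assms by (intro mult_left_mono ln_le_minus_one) auto
  also have "\<dots> \<le> 2 / sqrt s"
    by simp
  finally have "s * - ln s \<le> s * (2 / sqrt s)"
    using assms by (intro mult_left_mono) auto
  also have "\<dots> = 2 * (s / sqrt s)"
    by simp
  also have "\<dots> = 2 * sqrt s"
    using assms by (simp add: real_div_sqrt)
  finally show ?thesis
    by simp
qed

lemma has_derivative_zeroI: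
  fixes f :: "'a::real_normed_vector \<Rightarrow> 'b::real_normed_vector"
  assumes bound: "\<forall>\<^sub>F y in at p. norm (f y - f p) \<le> norm (y - p) * g y"
    and g: "(g \<longlongrightarrow> 0) (at p)"
  shows "(f has_derivative (\<lambda>v. 0)) (at p)"
  unfolding has_derivative_iff_norm
proof
  have "\<forall>\<^sub>F y in at p. norm (norm (f y - f p - 0) / norm (y - p)) \<le> g y"
    using bound unfolding eventually_at_filter
    by eventually_elim (simp add: divide_le_eq mult.commute)
  then show "((\<lambda>y. norm (f y - f p - 0) / norm (y - p)) \<longlongrightarrow> 0) (at p)"
    using g by (rule Lim_null_comparison)
qed simp

lemma has_derivative_zero_mult_continuous:
  fixes f g :: "'a::real_normed_vector \<Rightarrow> real"
  assumes f: "(f has_derivative (\<lambda>v. 0)) (at p)" and "f p = 0" and g: "isCont g p"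
  shows "((\<lambda>y. f y * g y) has_derivative (\<lambda>v. 0)) (at p)"
proof -
  have "((\<lambda>y. norm (f y - f p - 0) / norm (y - p) * \<bar>g y\<bar>) \<longlongrightarrow> 0 * \<bar>g p\<bar>) (at p)"
    using f g unfolding has_derivative_iff_norm isCont_def by (intro tendsto_intros) auto
  then show ?thesis
    unfolding has_derivative_iff_norm using \<open>f p = 0\<close> by (simp add: abs_mult)
qed

lemma has_derivative_zero_outside_ball:
  fixes h :: "'a::real_normed_vector \<Rightarrow> 'b::real_normed_vector"
  assumes "\<And>w. norm w \<ge> 1 \<Longrightarrow> h w = 0" and "norm z > 1"
  shows "(h has_derivative (\<lambda>v. 0)) (at z)"
proof (rule has_derivative_transform_within_open[OF has_derivative_const])
  show "open {w::'a. 1 < norm w}"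
    by (intro open_Collect_less continuous_intros)
qed (use assms in auto)

lemma sum_Basis_inner_blinfun_apply:
  fixes L :: "'a::euclidean_space \<Rightarrow>\<^sub>L real"
  shows "(\<Sum>i\<in>Basis. (z \<bullet> i) * L i) = L z"
proof -
  have "L z = L (\<Sum>i\<in>Basis. (z \<bullet> i) *\<^sub>R i)"
    by (simp add: euclidean_representation)
  then show ?thesis
    by (simp add: blinfun.sum_right blinfun.scaleR_right)
qed

lemma cball_subset_cbox_One:
  fixes x :: "'a::euclidean_space"
  shows "cball x r \<subseteq> cbox (x - r *\<^sub>R One) (x + r *\<^sub>R One)"
proof
  fix y assume "y \<in> cball x r"
  then have "\<bar>(y - x) \<bullet> i\<bar> \<le> r" if "i \<in> Basis" for i
    using Basis_le_norm[OF that, of "y - x"] by (simp add: dist_norm norm_minus_commute)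
  then show "y \<in> cbox (x - r *\<^sub>R One) (x + r *\<^sub>R One)"
    by (fastforce simp: mem_box inner_simps abs_le_iff)
qed

section \<open>Integrals of partial derivatives\<close>

lemma has_integral_cbox_vanishing_outside_ball:
  fixes h :: "'a::euclidean_space \<Rightarrow> real"
  assumes cont: "continuous_on UNIV h" and supp: "\<And>z. norm z \<ge> 1 \<Longrightarrow> h z = 0"
    and ab: "cball 0 1 \<subseteq> cbox a b"
  shows "(h has_integral integral UNIV h) (cbox a b)"
proof -
  have int: "(h has_integral integral (cbox a b) h) (cbox a b)"
    by (intro integrable_integral integrable_continuous continuous_on_subset[OF cont]) simp
  then have "(h has_integral integral (cbox a b) h) UNIV"
  proof (rule has_integral_on_superset)
    fix z assume "z \<notin> cbox a b"
    then have "z \<notin> cball 0 1"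
      using ab by blast
    then show "h z = 0"
      by (intro supp) simp
  qed simp
  then have "integral UNIV h = integral (cbox a b) h"
    by (rule integral_unique)
  then show ?thesis
    using int by simp
qed

lemma integral_translate_vanishing_outside_ball:
  fixes h :: "'a::euclidean_space \<Rightarrow> real"
  assumes cont: "continuous_on UNIV h" and supp: "\<And>z. norm z \<ge> 1 \<Longrightarrow> h z = 0"
    and v: "norm v < 1"
  shows "integral (cbox (-(2 *\<^sub>R One)) (2 *\<^sub>R One)) (\<lambda>z. h (z + v)) = integral UNIV h"
proof -
  have "cball 0 1 \<subseteq> cball v 2"
  proof
    fix y :: 'a assume "y \<in> cball 0 1"
    then have "norm (v - y) \<le> norm v + norm y" "norm y \<le> 1"
      by (simp_all add: norm_triangle_ineq4)
    then show "y \<in> cball v 2"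
      using v by (simp add: dist_norm)
  qed
  then have "cball 0 1 \<subseteq> cbox (v - 2 *\<^sub>R One) (v + 2 *\<^sub>R One)"
    using cball_subset_cbox_One[of v 2] by blast
  then have "((\<lambda>z. h (1 *\<^sub>R z + v)) has_integral integral UNIV h /\<^sub>R 1 ^ DIM('a))
               (cbox ((v - 2 *\<^sub>R One - v) /\<^sub>R 1) ((v + 2 *\<^sub>R One - v) /\<^sub>R 1))"
    by (intro has_integral_affinity'[OF has_integral_cbox_vanishing_outside_ball[OF cont supp]]) simp_all
  then have "((\<lambda>z. h (z + v)) has_integral integral UNIV h) (cbox (-(2 *\<^sub>R One)) (2 *\<^sub>R One))"
    by simp
  then show ?thesis
    by (rule integral_unique)
qed

lemma has_integral_partial_derivative_vanishing_outside_ball: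
  fixes h :: "'a::euclidean_space \<Rightarrow> real"
  assumes h: "\<And>z. (h has_derivative h' z) (at z)"
    and cont: "continuous_on UNIV (\<lambda>z. h' z e)"
    and supp: "\<And>z. norm z \<ge> 1 \<Longrightarrow> h z = 0"
    and e: "e \<in> Basis"
  shows "((\<lambda>z. h' z e) has_integral 0) UNIV"
proof -
  \<comment> \<open>By translation invariance \<open>t \<mapsto> \<integral>\<^sub>B h (z + t e)\<close> is constant, and its derivative
      at \<open>0\<close> is \<open>\<integral>\<^sub>B \<partial>\<^sub>e h\<close>.\<close>
  define B :: "'a set" where "B = cbox (-(2 *\<^sub>R One)) (2 *\<^sub>R One)"
  have h_cont: "continuous_on UNIV h"
    using h by (meson continuous_at_imp_continuous_on has_derivative_continuous)
  have "((\<lambda>t. integral B (\<lambda>z. h (z + t *\<^sub>R e))) has_field_derivative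
          integral B (\<lambda>z. h' (z + 0 *\<^sub>R e) e)) (at 0 within {-1<..<1})"
    unfolding B_def
  proof (rule leibniz_rule_field_derivative)
    fix t :: real and z :: 'a
    have "((\<lambda>t. h (z + t *\<^sub>R e)) has_derivative (\<lambda>s. h' (z + t *\<^sub>R e) (s *\<^sub>R e))) (at t within {-1<..<1})"
      by (rule has_derivative_compose[OF _ h]) (auto intro!: derivative_eq_intros)
    moreover have "(\<lambda>s. h' (z + t *\<^sub>R e) (s *\<^sub>R e)) = (*) (h' (z + t *\<^sub>R e) e)"
      using has_derivative_linear[OF h] by (auto simp: linear_scale fun_eq_iff)
    ultimately show "((\<lambda>t. h (z + t *\<^sub>R e)) has_field_derivative h' (z + t *\<^sub>R e) e) (at t within {-1<..<1})"
      by (simp add: has_field_derivative_def)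
  next
    show "continuous_on ({-1<..<1} \<times> cbox (-(2 *\<^sub>R One)) (2 *\<^sub>R One)) (\<lambda>(t, z). h' (z + t *\<^sub>R e) e)"
      unfolding split_beta by (intro continuous_on_compose2[OF cont] continuous_intros) auto
  qed (auto intro!: integrable_continuous continuous_on_compose2[OF h_cont] continuous_intros)
  then have D: "((\<lambda>t. integral B (\<lambda>z. h (z + t *\<^sub>R e))) has_field_derivative integral B (\<lambda>z. h' z e)) (at 0)"
    using at_within_open[of 0 "{-1<..<1::real}"] by simp
  have translate: "integral B (\<lambda>z. h (z + t *\<^sub>R e)) = integral UNIV h" if "t \<in> {-1<..<1}" for t
    unfolding B_def using e that by (intro integral_translate_vanishing_outside_ball h_cont supp) auto
  have "((\<lambda>t. integral UNIV h) has_field_derivative integral B (\<lambda>z. h' z e)) (at 0)"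
    by (rule has_field_derivative_transform_within_open[OF D, where S="{-1<..<1}"]) (simp_all add: translate)
  then have "integral B (\<lambda>z. h' z e) = 0"
    using DERIV_const DERIV_unique by blast
  then have "((\<lambda>z. h' z e) has_integral 0) B"
    unfolding B_def by (metis integrable_integral integrable_continuous continuous_on_subset[OF cont] subset_UNIV)
  then show ?thesis
  proof (rule has_integral_on_superset)
    fix z assume "z \<notin> B"
    then have "norm z > 1"
      using cball_subset_cbox_One[of "0::'a" 2] by (force simp: B_def)
    then show "h' z e = 0"
      using has_derivative_unique[OF h has_derivative_zero_outside_ball[OF supp]] by metis
  qed simp
qed

section \<open>The logarithmic kernel\<close>

text \<open>At the origin the kernel takes the junk value \<open>ln 0 = 0\<close>, which matches
  \<open>ln (r / dist x x) = ln (r / 0) = 0\<close> in the integrand of the theorem.\<close>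

definition log_kernel :: "'a::real_normed_vector \<Rightarrow> real" where
  "log_kernel z = - ln (min 1 (norm z))"

lemma log_kernel_eq_0: "norm z \<ge> 1 \<Longrightarrow> log_kernel z = 0"
  by (simp add: log_kernel_def)

lemma log_kernel_eq: "norm z < 1 \<Longrightarrow> log_kernel z = - ln (norm z)"
  by (simp add: log_kernel_def)

lemma log_kernel_nonneg: "log_kernel z \<ge> 0"
  by (cases "z = 0") (simp_all add: log_kernel_def)

lemma borel_measurable_log_kernel: "log_kernel \<in> borel_measurable borel"
  unfolding log_kernel_def[abs_def] by measurable

lemma log_kernel_mult_norm_le: "log_kernel z * norm z \<le> 2 * sqrt (norm z)"
proof (cases "z = 0 \<or> norm z \<ge> 1")
  case False
  then show ?thesis
    using minus_mult_ln_le_two_sqrt[of "norm z"] by (simp add: log_kernel_eq mult.commute)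
qed (auto simp: log_kernel_eq_0)

lemma continuous_log_kernel_scaleR: "continuous (at z) (\<lambda>z. log_kernel z *\<^sub>R z)"
proof (cases "z = 0")
  case False
  then show ?thesis
    unfolding log_kernel_def by (intro continuous_intros) (auto simp: min_def)
next
  case True
  have "\<forall>\<^sub>F y in at (0::'a). norm (log_kernel y *\<^sub>R y) \<le> 2 * sqrt (norm y)"
    by (simp add: log_kernel_nonneg log_kernel_mult_norm_le)
  moreover have "isCont (\<lambda>y. 2 * sqrt (norm y)) (0::'a)"
    by (intro continuous_intros)
  then have "((\<lambda>y. 2 * sqrt (norm y)) \<longlongrightarrow> 0) (at (0::'a))"
    by (simp add: isCont_def)
  ultimately have "((\<lambda>y. log_kernel y *\<^sub>R y) \<longlongrightarrow> 0) (at (0::'a))"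
    by (rule Lim_null_comparison)
  then show ?thesis
    using True by (simp add: continuous_at)
qed

lemma continuous_on_log_kernel_scaleR: "continuous_on S (\<lambda>z. log_kernel z *\<^sub>R z)"
  using continuous_log_kernel_scaleR by (blast intro: continuous_at_imp_continuous_on)

lemma nn_integral_inverse_atLeastAtMost:
  fixes a b :: real
  assumes "0 < a" "a \<le> b"
  shows "(\<integral>\<^sup>+s. ennreal (1 / s) * indicator {a..b} s \<partial>lborel) = ennreal (ln b - ln a)"
proof (rule nn_integral_has_integral_lebesgue')
  show "((\<lambda>s. 1 / s) has_integral (ln b - ln a)) {a..b}"
  proof (rule fundamental_theorem_of_calculus)
    fix s assume "s \<in> {a..b}"
    then show "(ln has_vector_derivative 1 / s) (at s within {a..b})"
      using assms by (auto intro!: derivative_eq_intros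
          simp: has_real_derivative_iff_has_vector_derivative[symmetric] divide_inverse)
  qed (rule assms)
qed (use assms in auto)

lemma nn_integral_log_kernel_layers:
  assumes "z \<noteq> 0"
  shows "(\<integral>\<^sup>+s. ennreal (1 / s) * indicator {norm z..1} s \<partial>lborel) = ennreal (log_kernel z)"
proof (cases "norm z \<le> 1")
  case True
  then show ?thesis
    using assms nn_integral_inverse_atLeastAtMost[of "norm z" 1] by (simp add: log_kernel_def)
qed (simp add: log_kernel_eq_0)

lemma nn_integral_ball_layers:
  fixes s :: real
  shows "(\<integral>\<^sup>+(z::'a::euclidean_space). ennreal (1 / s) * indicator {norm z..1} s \<partial>lborel)
           = ennreal (indicator {0<..1} s * (unit_ball_vol DIM('a) * s ^ (DIM('a) - 1)))"
proof (cases "0 < s \<and> s \<le> 1")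
  case True
  have "(\<integral>\<^sup>+(z::'a). ennreal (1 / s) * indicator {norm z..1} s \<partial>lborel)
          = (\<integral>\<^sup>+z. ennreal (1 / s) * indicator (cball (0::'a) s) z \<partial>lborel)"
    using True by (intro nn_integral_cong) (auto simp: indicator_def)
  also have "\<dots> = ennreal (1 / s) * ennreal (unit_ball_vol DIM('a) * s ^ DIM('a))"
    using True by (simp add: nn_integral_cmult_indicator emeasure_cball)
  also have "\<dots> = ennreal (unit_ball_vol DIM('a) * s ^ (DIM('a) - 1))"
    using True by (cases "DIM('a)") (simp_all add: ennreal_mult[symmetric] field_simps)
  finally show ?thesis
    using True by simp
next
  case False
  have zero: "ennreal (1 / s) * indicator {norm z..1} s = 0" for z :: 'a
  proof (cases "s \<le> 0")
    case True
    then have "s = 0 \<or> s < norm z"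
      using norm_ge_zero[of z] by linarith
    then show ?thesis
      by (auto simp: indicator_def)
  qed (use False in \<open>auto simp: indicator_def\<close>)
  show ?thesis
    using False by (simp only: zero) (simp add: indicator_def)
qed

lemma has_integral_log_kernel:
  "((log_kernel :: 'a::euclidean_space \<Rightarrow> real) has_integral unit_ball_vol DIM('a) / DIM('a)) UNIV"
proof -
  define m where "m = DIM('a)"
  define c where "c = unit_ball_vol m"
  have "(\<integral>\<^sup>+(z::'a). ennreal (log_kernel z) \<partial>lborel)
          = (\<integral>\<^sup>+(z::'a). (\<integral>\<^sup>+s. ennreal (1 / s) * indicator {norm z..1} s \<partial>lborel) \<partial>lborel)"
    by (rule nn_integral_cong_AE)
       (use AE_lborel_singleton[of 0] in \<open>auto simp: nn_integral_log_kernel_layers\<close>)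
  also have "\<dots> = (\<integral>\<^sup>+s. (\<integral>\<^sup>+(z::'a). ennreal (1 / s) * indicator {norm z..1} s \<partial>lborel) \<partial>lborel)"
    by (rule lborel_pair.Fubini'[symmetric]) (unfold indicator_def atLeastAtMost_iff, measurable)
  also have "\<dots> = (\<integral>\<^sup>+s. ennreal (c * s ^ (m - 1)) * indicator {0..1} s \<partial>lborel)"
  proof (rule nn_integral_cong_AE)
    have layers: "ennreal (indicator {0<..1} s * (unit_ball_vol DIM('a) * s ^ (DIM('a) - 1)))
                    = ennreal (c * s ^ (m - 1)) * indicator {0..1} s" if "s \<noteq> 0" for s :: real
      using that by (simp add: indicator_def c_def m_def)
    show "AE s in lborel. (\<integral>\<^sup>+(z::'a). ennreal (1 / s) * indicator {norm z..1} s \<partial>lborel)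
                 = ennreal (c * s ^ (m - 1)) * indicator {0..1} s"
      by (rule AE_mp[OF AE_lborel_singleton[of 0] AE_I2]) (intro impI, unfold nn_integral_ball_layers, erule layers)
  qed
  also have "\<dots> = ennreal (c / m)"
  proof (rule nn_integral_has_integral_lebesgue')
    have "((\<lambda>s. c * s ^ (m - 1)) has_integral (c * 1 ^ m / m - c * 0 ^ m / m)) {0..1}"
    proof (rule fundamental_theorem_of_calculus)
      fix s :: real
      show "((\<lambda>s. c * s ^ m / m) has_vector_derivative c * s ^ (m - 1)) (at s within {0..1})"
        unfolding has_real_derivative_iff_has_vector_derivative[symmetric]
        by (auto intro!: derivative_eq_intros simp: m_def)
    qed simp
    then show "((\<lambda>s. c * s ^ (m - 1)) has_integral c / m) {0..1}"
      by (simp add: m_def power_0_left)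
  qed (simp add: c_def)
  finally have "(\<integral>\<^sup>+(z::'a). ennreal (log_kernel z) \<partial>lborel) = ennreal (c / m)" .
  then show ?thesis
    by (intro nn_integral_has_integral[OF borel_measurable_log_kernel log_kernel_nonneg])
       (simp_all add: c_def m_def)
qed

lemma log_kernel_outside_cbox:
  fixes z :: "'a::euclidean_space"
  assumes "z \<notin> cbox (- One) One"
  shows "log_kernel z = 0"
proof -
  have "z \<notin> cball 0 1"
    using assms cball_subset_cbox_One[of "0::'a" 1] by auto
  then show ?thesis
    by (intro log_kernel_eq_0) simp
qed

lemma integral_cbox_mult_log_kernel:
  fixes f :: "'a::euclidean_space \<Rightarrow> real"
  shows "integral (cbox (- One) One) (\<lambda>z. f z * log_kernel z) = integral UNIV (\<lambda>z. f z * log_kernel z)"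
proof -
  have "(\<lambda>z. if z \<in> cbox (- One) One then f z * log_kernel z else 0) = (\<lambda>z. f z * log_kernel z)"
    by (auto simp: log_kernel_outside_cbox)
  then show ?thesis
    using integral_restrict_UNIV[of "cbox (- One) One" "\<lambda>z. f z * log_kernel z"] by simp
qed

lemma has_integral_cbox_mult_log_kernel_iff:
  fixes f :: "'a::euclidean_space \<Rightarrow> real"
  shows "((\<lambda>z. f z * log_kernel z) has_integral I) (cbox (- One) One)
           \<longleftrightarrow> ((\<lambda>z. f z * log_kernel z) has_integral I) UNIV"
proof -
  have "(\<lambda>z. if z \<in> cbox (- One) One then f z * log_kernel z else 0) = (\<lambda>z. f z * log_kernel z)"
    by (auto simp: log_kernel_outside_cbox)
  then show ?thesis
    using has_integral_restrict_UNIV[of "cbox (- One) One" "\<lambda>z. f z * log_kernel z"] by simp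
qed

lemma integrable_on_mult_log_kernel:
  fixes f :: "'a::euclidean_space \<Rightarrow> real"
  assumes "continuous_on (cbox a b) f"
  shows "(\<lambda>z. f z * log_kernel z) integrable_on cbox a b"
proof -
  have "(log_kernel :: 'a \<Rightarrow> real) absolutely_integrable_on UNIV"
    using has_integral_log_kernel log_kernel_nonneg by (intro nonnegative_absolutely_integrable_1) auto
  then have "log_kernel absolutely_integrable_on cbox a b"
    by (rule absolutely_integrable_on_subcbox) simp
  moreover have "f \<in> borel_measurable (lebesgue_on (cbox a b))"
    using assms by (rule continuous_imp_measurable_on_sets_lebesgue) simp
  moreover have "bounded (f ` cbox a b)"
    using assms by (intro compact_imp_bounded compact_continuous_image compact_cbox)
  ultimately have "(\<lambda>z. f z * log_kernel z) absolutely_integrable_on cbox a b"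
    by (intro absolutely_integrable_bounded_measurable_product[OF bilinear_times]) auto
  then show ?thesis
    by (simp add: absolutely_integrable_on_def)
qed

section \<open>A potential for the radial field of the kernel\<close>

definition log_potential_profile :: "real \<Rightarrow> real" where
  "log_potential_profile q = (1 - q + q * ln q) / 4"

definition log_potential :: "'a::real_normed_vector \<Rightarrow> real" where
  "log_potential z = log_potential_profile (min 1 (norm z ^ 2))"

lemma log_potential_profile_bounds:
  assumes "0 \<le> q" "q \<le> 1"
  shows "0 \<le> log_potential_profile q" "log_potential_profile q \<le> (1 - q)\<^sup>2 / 4"
proof -
  have "q * ln q \<le> q * (q - 1)"
    using assms by (cases "q = 0") (auto intro: mult_left_mono ln_le_minus_one)
  then have "q * ln q \<le> q * q - q"
    by (simp add: right_diff_distrib)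
  moreover have "- (q * ln q) \<le> 1 - q"
  proof (cases "q = 0")
    case False
    then have "q * ln (1 / q) \<le> q * (1 / q - 1)"
      using assms by (intro mult_left_mono ln_le_minus_one) auto
    then show ?thesis
      using False assms by (simp add: ln_div right_diff_distrib)
  qed simp
  moreover have "(1 - q)\<^sup>2 = 1 - 2 * q + q * q"
    by (simp add: power2_eq_square algebra_simps)
  ultimately show "0 \<le> log_potential_profile q" "log_potential_profile q \<le> (1 - q)\<^sup>2 / 4"
    unfolding log_potential_profile_def by (auto intro: divide_right_mono)
qed

lemma log_potential_eq_0: "norm z \<ge> 1 \<Longrightarrow> log_potential z = 0"
  by (simp add: log_potential_def log_potential_profile_def min_def one_le_power)

lemma log_potential_near_origin:
  fixes y :: "'a::real_normed_vector"
  assumes "norm y < 1"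
  shows "\<bar>log_potential y - log_potential (0::'a)\<bar> \<le> norm y * (norm y / 4 + sqrt (norm y))"
proof (cases "y = 0")
  case False
  define n where "n = norm y"
  have n: "0 < n" "n < 1"
    using assms False by (auto simp: n_def)
  have "log_potential y = log_potential_profile (n\<^sup>2)"
    using n by (simp add: log_potential_def n_def power_le_one)
  also have "\<dots> = (1 - n\<^sup>2 + 2 * (n * (n * ln n))) / 4"
    using n by (simp add: log_potential_profile_def ln_realpow) (simp add: power2_eq_square)
  finally have "log_potential y - log_potential (0::'a) = - (n\<^sup>2 / 4) + n * (n * ln n) / 2"
    by (simp add: log_potential_def log_potential_profile_def field_simps)
  moreover have "n * (n * ln n) \<le> 0"
    using n by (simp add: mult_nonneg_nonpos)
  moreover have "n * - (n * ln n) \<le> n * (2 * sqrt n)"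
    using n minus_mult_ln_le_two_sqrt[of n] by (intro mult_left_mono) auto
  then have "- (n * (n * ln n)) \<le> 2 * (n * sqrt n)"
    by (simp add: algebra_simps)
  moreover have "0 \<le> n * n" "0 \<le> n * sqrt n"
    using n by simp_all
  ultimately have "\<bar>log_potential y - log_potential (0::'a)\<bar> \<le> n * n / 4 + n * sqrt n"
    unfolding abs_le_iff power2_eq_square by (intro conjI; linarith)
  then show ?thesis
    by (simp add: n_def algebra_simps)
qed (simp add: log_potential_def log_potential_profile_def)

lemma log_potential_near_sphere:
  assumes "norm z = 1"
  shows "\<bar>log_potential y\<bar> \<le> norm (y - z) ^ 2"
proof -
  define q where "q = min 1 (norm y ^ 2)"
  have q: "0 \<le> q" "q \<le> 1"
    by (auto simp: q_def)
  have "1 - q \<le> 2 * norm (y - z)"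
  proof (cases "norm y \<ge> 1")
    case False
    have "1 - norm y \<le> norm (y - z)"
      using assms norm_triangle_ineq3[of z y] by (simp add: norm_minus_commute)
    then have "(1 - norm y) * (1 + norm y) \<le> norm (y - z) * 2"
      using False by (intro mult_mono) auto
    moreover have "q = norm y ^ 2"
      using False by (simp add: q_def power_le_one)
    ultimately show ?thesis
      by (simp add: power2_eq_square algebra_simps)
  qed (simp add: q_def power_le_one_iff)
  then have "(1 - q)\<^sup>2 \<le> (2 * norm (y - z))\<^sup>2"
    using q by (intro power_mono) auto
  then show ?thesis
    using log_potential_profile_bounds[OF q]
    by (simp add: log_potential_def q_def[symmetric] power_mult_distrib)
qed

lemma has_derivative_log_potential_profile:
  "q > 0 \<Longrightarrow> (log_potential_profile has_real_derivative (ln q / 4)) (at q)"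
  unfolding log_potential_profile_def
  by (rule derivative_eq_intros refl | simp)+

lemma has_derivative_log_potential_origin:
  "(log_potential has_derivative (\<lambda>v. 0)) (at (0::'a::real_normed_vector))"
proof (rule has_derivative_zeroI)
  show "\<forall>\<^sub>F y in at (0::'a). norm (log_potential y - log_potential (0::'a))
                          \<le> norm (y - 0) * (norm y / 4 + sqrt (norm y))"
    unfolding eventually_at by (intro exI[of _ 1]) (simp add: log_potential_near_origin)
  have "isCont (\<lambda>y. norm y / 4 + sqrt (norm y)) (0::'a)"
    by (intro continuous_intros) simp
  then show "((\<lambda>y. norm y / 4 + sqrt (norm y)) \<longlongrightarrow> 0) (at (0::'a))"
    by (simp add: isCont_def)
qed

lemma has_derivative_log_potential_sphere:
  assumes "norm z = 1"
  shows "(log_potential has_derivative (\<lambda>v. 0)) (at z)"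
proof (rule has_derivative_zeroI)
  show "\<forall>\<^sub>F y in at z. norm (log_potential y - log_potential z) \<le> norm (y - z) * norm (y - z)"
    using assms log_potential_near_sphere[of z]
    by (intro always_eventually allI) (simp add: log_potential_eq_0 power2_eq_square)
  have "isCont (\<lambda>y. norm (y - z)) z"
    by (intro continuous_intros)
  then show "((\<lambda>y. norm (y - z)) \<longlongrightarrow> 0) (at z)"
    by (simp add: isCont_def)
qed

lemma has_derivative_log_potential_inside:
  fixes z :: "'a::euclidean_space"
  assumes "0 < norm z" "norm z < 1"
  shows "(log_potential has_derivative (\<lambda>v. - log_kernel z * (z \<bullet> v))) (at z)"
proof -
  have "((\<lambda>y. norm y ^ 2) has_derivative (\<lambda>v. 2 * (z \<bullet> v))) (at z)"
    unfolding power2_norm_eq_inner by (rule derivative_eq_intros refl | simp add: inner_commute)+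
  moreover have "(log_potential_profile has_derivative (*) (ln (norm z ^ 2) / 4)) (at (norm z ^ 2))"
    using assms by (intro has_derivative_log_potential_profile[unfolded has_field_derivative_def]) simp
  ultimately have "((\<lambda>y. log_potential_profile (norm y ^ 2)) has_derivative
                     (\<lambda>v. (ln (norm z ^ 2) / 4) * (2 * (z \<bullet> v)))) (at z)"
    by (rule has_derivative_compose)
  then have "(log_potential has_derivative (\<lambda>v. (ln (norm z ^ 2) / 4) * (2 * (z \<bullet> v)))) (at z)"
    by (rule has_derivative_transform_within_open[where s="ball 0 1"])
       (use assms in \<open>auto simp: log_potential_def power_le_one\<close>)
  then show ?thesis
    using assms by (simp add: log_kernel_eq ln_realpow)
qed

lemma has_derivative_log_potential:
  fixes z :: "'a::euclidean_space"
  shows "(log_potential has_derivative (\<lambda>v. - log_kernel z * (z \<bullet> v))) (at z)"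
proof -
  consider "z = 0" | "0 < norm z" "norm z < 1" | "norm z = 1" | "norm z > 1"
    by fastforce
  then show ?thesis
  proof cases
    case 1
    then show ?thesis
      using has_derivative_log_potential_origin by simp
  next
    case 2
    then show ?thesis
      by (rule has_derivative_log_potential_inside)
  next
    case 3
    then show ?thesis
      using has_derivative_log_potential_sphere by (simp add: log_kernel_eq_0)
  next
    case 4
    then show ?thesis
      using has_derivative_zero_outside_ball[OF log_potential_eq_0] by (simp add: log_kernel_eq_0)
  qed
qed

lemma has_derivative_log_potential_mult:
  fixes f :: "'a::euclidean_space \<Rightarrow> real"
  assumes cont: "continuous_on UNIV f" and f: "norm z < 1 \<Longrightarrow> (f has_derivative f') (at z)"
  shows "((\<lambda>w. log_potential w * f w) has_derivative
           (\<lambda>v. - log_kernel z * (z \<bullet> v) * f z + log_potential z * f' v)) (at z)"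
proof -
  consider "norm z < 1" | "norm z = 1" | "norm z > 1"
    by linarith
  then show ?thesis
  proof cases
    case 1
    show ?thesis
      using has_derivative_mult[OF has_derivative_log_potential f[OF 1]] by (simp add: algebra_simps)
  next
    case 2
    have "((\<lambda>w. log_potential w * f w) has_derivative (\<lambda>v. 0)) (at z)"
      using 2 cont
      by (intro has_derivative_zero_mult_continuous has_derivative_log_potential_sphere)
         (auto simp: log_potential_eq_0 continuous_on_eq_continuous_at)
    then show ?thesis
      using 2 by (simp add: log_kernel_eq_0 log_potential_eq_0)
  next
    case 3
    have "((\<lambda>w. log_potential w * f w) has_derivative (\<lambda>v. 0)) (at z)"
      using 3 by (intro has_derivative_zero_outside_ball) (simp_all add: log_potential_eq_0)
    then show ?thesis
      using 3 by (simp add: log_kernel_eq_0 log_potential_eq_0)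
  qed
qed

text \<open>Composing \<open>u\<close> with \<open>\<lambda>z. x + \<rho> *\<^sub>R unit_ball_retraction z\<close> keeps all arguments
  in \<open>cball x \<rho>\<close>, so the integrands below are defined and continuous on the whole space;
  as \<open>log_kernel\<close> vanishes outside the unit ball, no integral against it changes.\<close>

definition unit_ball_retraction :: "'a::real_normed_vector \<Rightarrow> 'a" where
  "unit_ball_retraction z = (1 / max 1 (norm z)) *\<^sub>R z"

lemma norm_unit_ball_retraction_le: "norm (unit_ball_retraction z) \<le> 1"
  by (simp add: unit_ball_retraction_def max_def field_simps)

lemma unit_ball_retraction_eq_self: "norm z \<le> 1 \<Longrightarrow> unit_ball_retraction z = z"
  by (simp add: unit_ball_retraction_def max_def)

lemma continuous_on_unit_ball_retraction: "continuous_on S unit_ball_retraction"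
  unfolding unit_ball_retraction_def[abs_def] by (intro continuous_intros) (auto simp: max_def)

lemma scaled_retraction_in_cball: "0 \<le> \<rho> \<Longrightarrow> x + \<rho> *\<^sub>R unit_ball_retraction z \<in> cball x \<rho>"
  using norm_unit_ball_retraction_le[of z] by (simp add: dist_norm mult_left_le)

lemma continuous_on_compose_scaled_retraction:
  assumes "continuous_on S f" "0 \<le> \<rho>" "cball x \<rho> \<subseteq> S"
  shows "continuous_on UNIV (\<lambda>z. f (x + \<rho> *\<^sub>R unit_ball_retraction z))"
proof (rule continuous_on_compose2[OF assms(1)])
  show "continuous_on UNIV (\<lambda>z. x + \<rho> *\<^sub>R unit_ball_retraction z)"
    by (intro continuous_intros continuous_on_unit_ball_retraction)
qed (use assms scaled_retraction_in_cball in blast)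

lemma has_derivative_compose_retraction:
  fixes g :: "'a::real_normed_vector \<Rightarrow> 'b::real_normed_vector"
  assumes "(g has_derivative g') (at (x + \<rho> *\<^sub>R z))" and "norm z < 1"
  shows "((\<lambda>w. g (x + \<rho> *\<^sub>R unit_ball_retraction w)) has_derivative (\<lambda>v. g' (\<rho> *\<^sub>R v))) (at z)"
proof -
  have "((\<lambda>w. g (x + \<rho> *\<^sub>R w)) has_derivative (\<lambda>v. g' (\<rho> *\<^sub>R v))) (at z)"
    by (rule has_derivative_compose[where f="\<lambda>w. x + \<rho> *\<^sub>R w", OF _ assms(1)])
       (auto intro!: derivative_eq_intros)
  then show ?thesis
    by (rule has_derivative_transform_within_open[where s="ball 0 1"])
       (use assms(2) in \<open>auto simp: unit_ball_retraction_eq_self\<close>)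
qed

lemma retraction_mult_log_kernel:
  "f (unit_ball_retraction z) * log_kernel z = f z * log_kernel z"
  by (cases "norm z \<le> 1") (auto simp: unit_ball_retraction_eq_self log_kernel_eq_0)

lemma sum_Basis_log_potential_flux:
  fixes L :: "'a::euclidean_space \<Rightarrow>\<^sub>L real" and T :: "'a \<Rightarrow>\<^sub>L ('a \<Rightarrow>\<^sub>L real)"
  assumes "(\<Sum>i\<in>Basis. T i i) = 0"
  shows "(\<Sum>i\<in>Basis. - log_kernel z * (z \<bullet> i) * L i + log_potential z * T (\<rho> *\<^sub>R i) i)
           = - (L z * log_kernel z)"
proof -
  have "(\<Sum>i\<in>Basis. T (\<rho> *\<^sub>R i) i) = \<rho> * (\<Sum>i\<in>Basis. T i i)"
    by (simp add: blinfun.scaleR_right blinfun.scaleR_left sum_distrib_left)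
  then have trace: "(\<Sum>i\<in>Basis. T (\<rho> *\<^sub>R i) i) = 0"
    using assms by simp
  have "(\<Sum>i\<in>Basis. - log_kernel z * (z \<bullet> i) * L i + log_potential z * T (\<rho> *\<^sub>R i) i)
          = - log_kernel z * (\<Sum>i\<in>Basis. (z \<bullet> i) * L i) + log_potential z * (\<Sum>i\<in>Basis. T (\<rho> *\<^sub>R i) i)"
    by (simp add: sum.distrib sum_distrib_left sum_subtractf sum_negf algebra_simps)
  also have "\<dots> = - (L z * log_kernel z)"
    by (simp add: trace sum_Basis_inner_blinfun_apply)
  finally show ?thesis .
qed

lemma has_integral_log_potential_flux_partial:
  fixes F :: "'a::euclidean_space \<Rightarrow> ('a \<Rightarrow>\<^sub>L real)" and DF :: "'a \<Rightarrow> ('a \<Rightarrow>\<^sub>L ('a \<Rightarrow>\<^sub>L real))"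
  assumes deriv: "\<And>y. y \<in> S \<Longrightarrow> (F has_derivative blinfun_apply (DF y)) (at y)"
    and cont: "continuous_on S DF"
    and "0 \<le> \<rho>" and "cball x \<rho> \<subseteq> S" and i: "i \<in> Basis"
  defines "P \<equiv> \<lambda>z. x + \<rho> *\<^sub>R unit_ball_retraction z"
  shows "((\<lambda>z. - log_kernel z * (z \<bullet> i) * F (P z) i + log_potential z * DF (P z) (\<rho> *\<^sub>R i) i)
           has_integral 0) UNIV"
proof -
  have P_in: "P z \<in> S" for z
    unfolding P_def using scaled_retraction_in_cball[OF \<open>0 \<le> \<rho>\<close>] \<open>cball x \<rho> \<subseteq> S\<close> by blast
  have "continuous_on S F"
    using deriv by (meson continuous_at_imp_continuous_on has_derivative_continuous)
  then have FP: "continuous_on UNIV (\<lambda>z. F (P z))"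
    unfolding P_def using \<open>0 \<le> \<rho>\<close> \<open>cball x \<rho> \<subseteq> S\<close> by (rule continuous_on_compose_scaled_retraction)
  have DFP: "continuous_on UNIV (\<lambda>z. DF (P z))"
    unfolding P_def using cont \<open>0 \<le> \<rho>\<close> \<open>cball x \<rho> \<subseteq> S\<close> by (rule continuous_on_compose_scaled_retraction)
  have potential_cont: "continuous_on UNIV (log_potential :: 'a \<Rightarrow> real)"
    using has_derivative_log_potential by (meson continuous_at_imp_continuous_on has_derivative_continuous)
  define h' where "h' z v = - log_kernel z * (z \<bullet> v) * F (P z) i + log_potential z * DF (P z) (\<rho> *\<^sub>R v) i"
    for z v
  have "((\<lambda>z. h' z i) has_integral 0) UNIV"
  proof (rule has_integral_partial_derivative_vanishing_outside_ball
      [where h="\<lambda>z. log_potential z * F (P z) i", OF _ _ _ i])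
    fix z :: 'a
    have "((\<lambda>w. F (P w) i) has_derivative (\<lambda>v. DF (P z) (\<rho> *\<^sub>R v) i)) (at z)" if "norm z < 1"
    proof -
      have Pz: "P z = x + \<rho> *\<^sub>R z"
        using that by (simp add: P_def unit_ball_retraction_eq_self)
      have "((\<lambda>w. F (P w)) has_derivative (\<lambda>v. DF (P z) (\<rho> *\<^sub>R v))) (at z)"
        unfolding Pz unfolding P_def
        using P_in[of z] that by (intro has_derivative_compose_retraction deriv) (simp_all add: Pz)
      then show ?thesis
        by (rule bounded_linear.has_derivative[OF blinfun.bounded_linear_left])
    qed
    moreover have "continuous_on UNIV (\<lambda>w. F (P w) i)"
      by (intro continuous_intros FP)
    ultimately show "((\<lambda>z. log_potential z * F (P z) i) has_derivative h' z) (at z)"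
      unfolding h'_def by (rule has_derivative_log_potential_mult[rotated])
  next
    have "continuous_on UNIV (\<lambda>z. - ((log_kernel z *\<^sub>R z) \<bullet> i) * F (P z) i
                                      + log_potential z * DF (P z) (\<rho> *\<^sub>R i) i)"
      by (intro continuous_intros continuous_on_log_kernel_scaleR potential_cont FP DFP)
    then show "continuous_on UNIV (\<lambda>z. h' z i)"
      by (simp add: h'_def)
  qed (simp add: log_potential_eq_0)
  then show ?thesis
    by (simp add: h'_def)
qed

lemma has_integral_log_kernel_flux_divergence_free:
  fixes F :: "'a::euclidean_space \<Rightarrow> ('a \<Rightarrow>\<^sub>L real)" and DF :: "'a \<Rightarrow> ('a \<Rightarrow>\<^sub>L ('a \<Rightarrow>\<^sub>L real))"
  assumes deriv: "\<And>y. y \<in> S \<Longrightarrow> (F has_derivative blinfun_apply (DF y)) (at y)"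
    and cont: "continuous_on S DF"
    and div: "\<And>y. y \<in> S \<Longrightarrow> (\<Sum>i\<in>Basis. DF y i i) = 0"
    and "0 \<le> \<rho>" and "cball x \<rho> \<subseteq> S"
  shows "((\<lambda>z. F (x + \<rho> *\<^sub>R z) z * log_kernel z) has_integral 0) UNIV"
proof -
  define P where "P = (\<lambda>z. x + \<rho> *\<^sub>R unit_ball_retraction z)"
  define h where "h z = (\<Sum>i\<in>Basis. - log_kernel z * (z \<bullet> i) * F (P z) i + log_potential z * DF (P z) (\<rho> *\<^sub>R i) i)"
    for z
  have "(h has_integral 0) UNIV"
    unfolding h_def P_def
    using has_integral_sum[OF finite_Basis has_integral_log_potential_flux_partial[OF deriv cont assms(4,5)]]
    by simp
  moreover have "h z = - (F (x + \<rho> *\<^sub>R z) z * log_kernel z)" for z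
  proof -
    have "P z \<in> S"
      unfolding P_def using scaled_retraction_in_cball[OF \<open>0 \<le> \<rho>\<close>] \<open>cball x \<rho> \<subseteq> S\<close> by blast
    then have "h z = - (F (P z) z * log_kernel z)"
      unfolding h_def by (rule sum_Basis_log_potential_flux[OF div])
    also have "F (P z) z * log_kernel z = F (x + \<rho> *\<^sub>R z) z * log_kernel z"
      unfolding P_def by (rule retraction_mult_log_kernel)
    finally show ?thesis .
  qed
  ultimately show ?thesis
    using has_integral_neg[of h 0 UNIV] by simp
qed

lemma has_field_derivative_along_ray:
  assumes "(u has_derivative blinfun_apply L) (at (x + t *\<^sub>R v))"
  shows "((\<lambda>t. u (x + t *\<^sub>R v)) has_field_derivative L v) (at t within U)"
proof -
  have "((\<lambda>t. u (x + t *\<^sub>R v)) has_derivative (\<lambda>s. L (s *\<^sub>R v))) (at t within U)"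
    by (rule has_derivative_compose[where f="\<lambda>t. x + t *\<^sub>R v", OF _ assms])
       (auto intro!: derivative_eq_intros)
  moreover have "(\<lambda>s. L (s *\<^sub>R v)) = (*) (L v)"
    by (simp add: fun_eq_iff blinfun.scaleR_right)
  ultimately show ?thesis
    by (simp add: has_field_derivative_def)
qed

lemma continuous_on_retraction_derivative_mult_log_kernel:
  fixes Du :: "'a::euclidean_space \<Rightarrow> ('a \<Rightarrow>\<^sub>L real)"
  assumes "continuous_on S Du" and "cball x r \<subseteq> S"
  shows "continuous_on ({0..r} \<times> UNIV)
           (\<lambda>(t, z). Du (x + t *\<^sub>R unit_ball_retraction z) (unit_ball_retraction z) * log_kernel z)"
proof -
  have "x + t *\<^sub>R unit_ball_retraction z \<in> S" if "t \<in> {0..r}" for t z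
    using that scaled_retraction_in_cball[of t x z] subset_cball[of t r x] assms(2) by auto
  then have "continuous_on ({0..r} \<times> UNIV) (\<lambda>p. Du (x + fst p *\<^sub>R unit_ball_retraction (snd p)))"
    by (intro continuous_on_compose2[OF assms(1)] continuous_intros
        continuous_on_compose2[OF continuous_on_unit_ball_retraction]) auto
  moreover have "continuous_on ({0..r} \<times> UNIV) (\<lambda>p::real \<times> 'a. log_kernel (snd p) *\<^sub>R snd p)"
    by (rule continuous_on_compose2[OF continuous_on_log_kernel_scaleR continuous_on_snd]) auto
  ultimately have "continuous_on ({0..r} \<times> UNIV)
                     (\<lambda>p. Du (x + fst p *\<^sub>R unit_ball_retraction (snd p)) (log_kernel (snd p) *\<^sub>R snd p))"
    by (rule blinfun.continuous_on)
  then show ?thesis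
  proof (rule continuous_on_eq)
    fix p :: "real \<times> 'a"
    let ?L = "Du (x + fst p *\<^sub>R unit_ball_retraction (snd p))"
    show "?L (log_kernel (snd p) *\<^sub>R snd p)
            = (case p of (t, z) \<Rightarrow> Du (x + t *\<^sub>R unit_ball_retraction z) (unit_ball_retraction z) * log_kernel z)"
      using retraction_mult_log_kernel[of "blinfun_apply ?L" "snd p"]
      by (simp add: split_beta blinfun.scaleR_right mult.commute) metis
  qed
qed

lemma has_field_derivative_log_kernel_average:
  fixes u :: "'a::euclidean_space \<Rightarrow> real"
  assumes du: "\<And>y. y \<in> S \<Longrightarrow> (u has_derivative blinfun_apply (Du y)) (at y)"
    and cont: "continuous_on S Du"
    and "cball x r \<subseteq> S" and "\<rho> \<in> {0..r}"
  shows "((\<lambda>t. integral (cbox (- One) One) (\<lambda>z. u (x + t *\<^sub>R unit_ball_retraction z) * log_kernel z))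
           has_field_derivative integral UNIV (\<lambda>z. Du (x + \<rho> *\<^sub>R z) z * log_kernel z)) (at \<rho> within {0..r})"
proof -
  have in_S: "cball x t \<subseteq> S" if "t \<in> {0..r}" for t
    using that subset_cball[of t r x] \<open>cball x r \<subseteq> S\<close> by auto
  have u_cont: "continuous_on S u"
    using du by (meson continuous_at_imp_continuous_on has_derivative_continuous)
  have "((\<lambda>t. integral (cbox (- One) One) (\<lambda>z. u (x + t *\<^sub>R unit_ball_retraction z) * log_kernel z))
          has_field_derivative integral (cbox (- One) One)
            (\<lambda>z. Du (x + \<rho> *\<^sub>R unit_ball_retraction z) (unit_ball_retraction z) * log_kernel z))
          (at \<rho> within {0..r})"
  proof (rule leibniz_rule_field_derivative)
    fix t z assume "t \<in> {0..r}"
    then have "x + t *\<^sub>R unit_ball_retraction z \<in> S"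
      using in_S scaled_retraction_in_cball[of t x z] by (meson atLeastAtMost_iff subsetD)
    then show "((\<lambda>t. u (x + t *\<^sub>R unit_ball_retraction z) * log_kernel z) has_field_derivative
                 Du (x + t *\<^sub>R unit_ball_retraction z) (unit_ball_retraction z) * log_kernel z)
                 (at t within {0..r})"
      by (intro DERIV_cmult_right has_field_derivative_along_ray du)
  next
    fix t assume "t \<in> {0..r}"
    then have "continuous_on UNIV (\<lambda>z. u (x + t *\<^sub>R unit_ball_retraction z))"
      using in_S by (intro continuous_on_compose_scaled_retraction[OF u_cont]) auto
    then show "(\<lambda>z. u (x + t *\<^sub>R unit_ball_retraction z) * log_kernel z) integrable_on cbox (- One) One"
      by (rule integrable_on_mult_log_kernel[OF continuous_on_subset[OF _ subset_UNIV]])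
  next
    show "continuous_on ({0..r} \<times> cbox (- One) One)
            (\<lambda>(t, z). Du (x + t *\<^sub>R unit_ball_retraction z) (unit_ball_retraction z) * log_kernel z)"
      by (rule continuous_on_subset[OF continuous_on_retraction_derivative_mult_log_kernel[OF cont \<open>cball x r \<subseteq> S\<close>]])
         auto
  qed (use assms in auto)
  moreover have "(\<lambda>z. Du (x + \<rho> *\<^sub>R unit_ball_retraction z) (unit_ball_retraction z) * log_kernel z)
                   = (\<lambda>z. Du (x + \<rho> *\<^sub>R z) z * log_kernel z)"
    by (simp only: retraction_mult_log_kernel[of "\<lambda>w. Du (x + \<rho> *\<^sub>R w) w"])
  ultimately show ?thesis
    by (simp add: integral_cbox_mult_log_kernel)
qed

lemma has_integral_log_kernel_mean_value:
  fixes u :: "'a::euclidean_space \<Rightarrow> real"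
  assumes du: "\<And>y. y \<in> S \<Longrightarrow> (u has_derivative blinfun_apply (Du y)) (at y)"
    and d2u: "\<And>y. y \<in> S \<Longrightarrow> (Du has_derivative blinfun_apply (D2u y)) (at y)"
    and cont: "continuous_on S D2u"
    and lap: "\<And>y. y \<in> S \<Longrightarrow> (\<Sum>i\<in>Basis. D2u y i i) = 0"
    and "0 \<le> r" and "cball x r \<subseteq> S"
  shows "((\<lambda>z. u (x + r *\<^sub>R z) * log_kernel z) has_integral u x * (unit_ball_vol DIM('a) / DIM('a))) UNIV"
proof -
  define G where "G \<rho> = integral (cbox (- One) One) (\<lambda>z. u (x + \<rho> *\<^sub>R unit_ball_retraction z) * log_kernel z)"
    for \<rho>
  have "continuous_on S Du"
    using d2u by (meson continuous_at_imp_continuous_on has_derivative_continuous)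
  have "(G has_field_derivative 0) (at \<rho> within {0..r})" if \<rho>: "\<rho> \<in> {0..r}" for \<rho>
  proof -
    have "cball x \<rho> \<subseteq> S"
      using \<rho> \<open>cball x r \<subseteq> S\<close> by (auto simp: subset_cball)
    then have "integral UNIV (\<lambda>z. Du (x + \<rho> *\<^sub>R z) z * log_kernel z) = 0"
      using \<rho> has_integral_log_kernel_flux_divergence_free[OF d2u cont lap] by (simp add: integral_unique)
    then show ?thesis
      unfolding G_def[abs_def]
      using has_field_derivative_log_kernel_average[OF du \<open>continuous_on S Du\<close> \<open>cball x r \<subseteq> S\<close> \<rho>] by simp
  qed
  then obtain C where "\<forall>\<rho>\<in>{0..r}. G \<rho> = C"
    using has_field_derivative_zero_constant[of "{0..r}" G] by auto
  then have "G r = G 0"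
    using \<open>0 \<le> r\<close> by auto
  also have "G 0 = integral (cbox (- One) One) (\<lambda>z::'a. u x * log_kernel z)"
    by (simp add: G_def)
  also have "\<dots> = integral UNIV (\<lambda>z::'a. u x * log_kernel z)"
    by (rule integral_cbox_mult_log_kernel)
  also have "\<dots> = u x * (unit_ball_vol DIM('a) / DIM('a))"
    by (rule integral_unique[OF has_integral_mult_right[OF has_integral_log_kernel]])
  finally have "G r = u x * (unit_ball_vol DIM('a) / DIM('a))" .
  moreover have "continuous_on S u"
    using du by (meson continuous_at_imp_continuous_on has_derivative_continuous)
  then have "continuous_on UNIV (\<lambda>z. u (x + r *\<^sub>R unit_ball_retraction z))"
    using \<open>0 \<le> r\<close> \<open>cball x r \<subseteq> S\<close> by (rule continuous_on_compose_scaled_retraction)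
  then have "((\<lambda>z. u (x + r *\<^sub>R unit_ball_retraction z) * log_kernel z) has_integral G r) (cbox (- One) One)"
    unfolding G_def
    by (rule integrable_integral[OF integrable_on_mult_log_kernel[OF continuous_on_subset[OF _ subset_UNIV]]])
  ultimately show ?thesis
    by (simp add: has_integral_cbox_mult_log_kernel_iff
        retraction_mult_log_kernel[of "\<lambda>w. u (x + r *\<^sub>R w)"])
qed

lemma has_integral_log_kernel_rescale:
  fixes v :: "'a::euclidean_space \<Rightarrow> real"
  assumes r: "r > 0" and v: "((\<lambda>z. v (x + r *\<^sub>R z) * log_kernel z) has_integral I) UNIV"
  shows "((\<lambda>y. v y * ln (r / dist x y)) has_integral r ^ DIM('a) * I) (ball x r)"
proof -
  define F where "F y = (if y \<in> ball x r then v y * ln (r / dist x y) else 0)" for y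
  have F_scaled: "F (r *\<^sub>R z + x) = v (x + r *\<^sub>R z) * log_kernel z" for z
  proof -
    have dist: "dist x (x + r *\<^sub>R z) = r * norm z"
      using r by (simp add: dist_norm)
    show ?thesis
    proof (cases "norm z < 1")
      case True
      have "ln (r / dist x (x + r *\<^sub>R z)) = log_kernel z"
        using r True by (cases "z = 0") (simp_all add: dist log_kernel_eq ln_div)
      then show ?thesis
        using r True by (simp add: F_def dist add.commute)
    qed (use r in \<open>simp add: F_def dist log_kernel_eq_0 add.commute\<close>)
  qed
  have "((\<lambda>z. F (r *\<^sub>R z + x)) has_integral I) (cbox (- One) One)"
    using v by (simp add: F_scaled has_integral_cbox_mult_log_kernel_iff)
  then have "((\<lambda>z. F (r *\<^sub>R z + x)) has_integral (r ^ DIM('a) * I) /\<^sub>R r ^ DIM('a))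
               (cbox ((x - r *\<^sub>R One - x) /\<^sub>R r) ((x + r *\<^sub>R One - x) /\<^sub>R r))"
    using r by (simp add: field_simps)
  then have "(F has_integral r ^ DIM('a) * I) (cbox (x - r *\<^sub>R One) (x + r *\<^sub>R One))"
    using has_integral_affinity_iff[OF r] by blast
  then have "(F has_integral r ^ DIM('a) * I) UNIV"
  proof (rule has_integral_on_superset)
    fix y assume "y \<notin> cbox (x - r *\<^sub>R One) (x + r *\<^sub>R One)"
    then have "y \<notin> cball x r"
      using cball_subset_cbox_One[of x r] by blast
    then show "F y = 0"
      by (simp add: F_def)
  qed simp
  moreover have "F = (\<lambda>y. if y \<in> ball x r then v y * ln (r / dist x y) else 0)"
    by (rule ext) (simp only: F_def)
  ultimately show ?thesis
    by (simp only: has_integral_restrict_UNIV)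
qed

lemma laplacian_eq_sum_second_derivatives:
  assumes "open S" and "y \<in> S"
    and du: "\<And>z. z \<in> S \<Longrightarrow> (u has_derivative blinfun_apply (Du z)) (at z)"
    and d2u: "(Du has_derivative blinfun_apply (D2u y)) (at y)"
  shows "laplacian u y = (\<Sum>i\<in>Basis. D2u y i i)"
proof -
  have "frechet_derivative (\<lambda>z. frechet_derivative u (at z) i) (at y) i = D2u y i i" for i
  proof -
    have "((\<lambda>z. Du z i) has_derivative (\<lambda>v. D2u y v i)) (at y)"
      by (rule bounded_linear.has_derivative[OF blinfun.bounded_linear_left d2u])
    then have "((\<lambda>z. frechet_derivative u (at z) i) has_derivative (\<lambda>v. D2u y v i)) (at y)"
      by (rule has_derivative_transform_within_open[where s=S])
         (use assms frechet_derivative_at[OF du] in auto)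
    then show ?thesis
      by (metis frechet_derivative_at)
  qed
  then show ?thesis
    by (simp add: laplacian_def)
qed

theorem theorem3:
  fixes D :: "'a::euclidean_space set" and u :: "'a \<Rightarrow> real" and x :: 'a and r :: real
  assumes "DIM('a) \<ge> 2"
    and "open D" and "connected D"
    and "harmonic_on D u"
    and "x \<in> D" and "r > 0" and "cball x r \<subseteq> D"
  shows "u x = real DIM('a) / measure lebesgue (ball x r) *
           integral (ball x r) (\<lambda>y. u y * ln (r / dist x y))"
proof -
  obtain Du :: "'a \<Rightarrow> ('a \<Rightarrow>\<^sub>L real)" and D2u :: "'a \<Rightarrow> ('a \<Rightarrow>\<^sub>L ('a \<Rightarrow>\<^sub>L real))"
    where du: "\<And>y. y \<in> D \<Longrightarrow> (u has_derivative blinfun_apply (Du y)) (at y)"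
      and d2u: "\<And>y. y \<in> D \<Longrightarrow> (Du has_derivative blinfun_apply (D2u y)) (at y)"
      and cont: "continuous_on D D2u"
      and harmonic: "\<And>y. y \<in> D \<Longrightarrow> laplacian u y = 0"
    using \<open>harmonic_on D u\<close> unfolding harmonic_on_def C2_on_def by blast
  have "(\<Sum>i\<in>Basis. D2u y i i) = 0" if "y \<in> D" for y
    using laplacian_eq_sum_second_derivatives[OF \<open>open D\<close> that, of u Du D2u] du d2u[OF that]
      harmonic[OF that] by simp
  then have "((\<lambda>z. u (x + r *\<^sub>R z) * log_kernel z) has_integral u x * (unit_ball_vol DIM('a) / DIM('a))) UNIV"
    using \<open>r > 0\<close> \<open>cball x r \<subseteq> D\<close> by (intro has_integral_log_kernel_mean_value[OF du d2u cont]) auto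
  then have "integral (ball x r) (\<lambda>y. u y * ln (r / dist x y))
               = r ^ DIM('a) * (u x * (unit_ball_vol DIM('a) / DIM('a)))"
    using \<open>r > 0\<close> by (intro integral_unique has_integral_log_kernel_rescale)
  moreover have "measure lebesgue (ball x r) = unit_ball_vol DIM('a) * r ^ DIM('a)"
    using \<open>r > 0\<close> by (simp add: content_ball)
  moreover have "unit_ball_vol DIM('a) \<noteq> 0"
    using unit_ball_vol_pos[of "DIM('a)"] by linarith
  ultimately show ?thesis
    using \<open>r > 0\<close> by (simp add: field_simps)
qed

end
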